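(* Let $\varepsilon,\gamma\in(0,1)$ be constants, $p\in(0,1/2)$, $L$ a positive integer, and $R=1-H(p)-\varepsilon$. Let $\mathcal{C}\subseteq\mathbb{F}_2^n$ be a random linear code of rate $R$. Then with probability $1-\exp(-\Omega_L(\gamma\varepsilon n))$, the code $\mathcal{C}$ satisfies, for all integers $0\le\ell\le L$, $$\left|\{x\in\mathbb{F}_2^n: L_{\mathcal{C}}(x)\ge\ell\}\right|\le 2^n\cdot 2^{-n\ell\varepsilon(1-\gamma)}.$$
   Context: $H(p)=-p\log_2 p-(1-p)\log_2(1-p)$. $\Delta$ is Hamming distance, $\mathcal{B}(x,r)=\{y\in\mathbb{F}_2^n:\Delta(x,y)\le r\}$, and $L_{\mathcal{C}}(x)=|\mathcal{B}(x,pn)\cap\mathcal{C}|$. A random linear code of rate $R$ is $\mathrm{span}(b_1,\dots,b_k)$ with $k=Rn$ (assumed an integer) and $b_1,\dots,b_k$ independent uniform in $\mathbb{F}_2^n$. $\Omega_L$ hides a constant depending only on $L$; the statement is for sufficiently large $n$. *)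

theory Defs
  imports Complex_Main
begin

definition bin_entropy :: "real \<Rightarrow> real" where
  "bin_entropy p = - p * log 2 p - (1 - p) * log 2 (1 - p)"

(* F_2^n : boolean lists of length n (True = 1) *)
definition vecs :: "nat \<Rightarrow> bool list set" where
  "vecs n = {x. length x = n}"

definition vadd :: "bool list \<Rightarrow> bool list \<Rightarrow> bool list" where
  "vadd x y = map2 (\<noteq>) x y"

definition vsum :: "nat \<Rightarrow> bool list list \<Rightarrow> bool list" where
  "vsum n xs = foldr vadd xs (replicate n False)"

definition hamming :: "bool list \<Rightarrow> bool list \<Rightarrow> nat" where
  "hamming x y = card {i. i < length x \<and> x ! i \<noteq> y ! i}"

(* F_2-span of b_1..b_k in F_2^n: all sums of sub-multisets (coefficients in {0,1}) *)
definition span2 :: "nat \<Rightarrow> bool list list \<Rightarrow> bool list set" where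
  "span2 n bs = {vsum n (map snd (filter fst (zip cs bs))) | cs. length cs = length bs}"

definition list_size :: "nat \<Rightarrow> real \<Rightarrow> bool list set \<Rightarrow> bool list \<Rightarrow> nat" where
  "list_size n p C x = card {y \<in> C. length y = n \<and> real (hamming x y) \<le> p * real n}"

definition good_code :: "nat \<Rightarrow> real \<Rightarrow> real \<Rightarrow> real \<Rightarrow> nat \<Rightarrow> bool list set \<Rightarrow> bool" where
  "good_code n p \<epsilon> \<gamma> L C \<longleftrightarrow>
     (\<forall>l \<le> L. real (card {x \<in> vecs n. list_size n p C x \<ge> l})
                 \<le> 2 ^ n * 2 powr (- real n * real l * \<epsilon> * (1 - \<gamma>)))"

(* probability that a random linear code span(b_1..b_k), b_i independent uniform in F_2^n,
   satisfies property P: uniform measure on (F_2^n)^k *)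
definition rlc_prob :: "nat \<Rightarrow> nat \<Rightarrow> (bool list set \<Rightarrow> bool) \<Rightarrow> real" where
  "rlc_prob n k P =
     real (card {bs. length bs = k \<and> set bs \<subseteq> vecs n \<and> P (span2 n bs)}) / 2 ^ (n * k)"

end

theory Submission
  imports Defs "HOL-Real_Asymp.Real_Asymp"
begin

(* Grow the code one uniform generator at a time and track the moments
   W_l = sum_x (L(x) choose l) of the list sizes, which bound the number of x with L(x) >= l.
   Adding a generator b gives L'(x) <= L(x) + L(x + b), so by Vandermonde's identity and
   translation invariance the average of W_l over b is at most sum_i W_i W_(l-i).  Hence, as long
   as the lower moments obey the targets (L Lambda)^(i-1) 2^n mu^i, with mu the mean list size,
   the expectation of W_l is at most (l-1)/(L Lambda) times its target, and by Markov's inequality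
   each of the k L targets fails with probability at most 1/Lambda.  Since
   |B(0, pn)| <= 2^(H(p) n), the choice Lambda = 2^(gamma eps n / 2) makes the targets the
   required bounds and the failure probability k L / Lambda exponentially small. *)

section \<open>Vectors over GF(2)\<close>

lemma finite_vecs [simp]: "finite (vecs n)"
  using finite_lists_length_eq[of "UNIV :: bool set" n] by (simp add: vecs_def)

lemma card_vecs: "card (vecs n) = 2 ^ n"
  using card_lists_length_eq[of "UNIV :: bool set" n] by (simp add: vecs_def card_UNIV_bool)

lemma vecs_Suc: "vecs (Suc n) = (\<lambda>(x, a). a # x) ` (vecs n \<times> UNIV)"
  using lists_length_Suc_eq[of "UNIV :: bool set" n] by (simp add: vecs_def)

lemma sum_vecs_Suc:
  "(\<Sum>x\<in>vecs (Suc n). f x) = (\<Sum>x\<in>vecs n. f (True # x) + f (False # x))"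
proof -
  have inj: "inj_on (\<lambda>(x, a). a # x) (vecs n \<times> (UNIV :: bool set))"
    by (auto simp: inj_on_def)
  have "(\<Sum>x\<in>vecs n. \<Sum>a\<in>UNIV. f (a # x)) = (\<Sum>(x, a)\<in>vecs n \<times> UNIV. f (a # x))"
    by (rule sum.cartesian_product)
  then show ?thesis
    unfolding vecs_Suc sum.reindex[OF inj] by (simp add: UNIV_bool add.commute case_prod_unfold)
qed

lemma length_vadd [simp]: "length (vadd x y) = min (length x) (length y)"
  by (simp add: vadd_def)

lemma nth_vadd [simp]: "i < length x \<Longrightarrow> i < length y \<Longrightarrow> vadd x y ! i = (x ! i \<noteq> y ! i)"
  by (simp add: vadd_def)

lemma vadd_commute: "vadd x y = vadd y x"
  by (auto simp: vadd_def intro!: nth_equalityI)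

lemma vadd_vadd_cancel: "length x = length y \<Longrightarrow> vadd (vadd x y) y = x"
  by (auto simp: vadd_def intro!: nth_equalityI)

lemma bij_betw_vadd: "y \<in> vecs n \<Longrightarrow> bij_betw (\<lambda>x. vadd x y) (vecs n) (vecs n)"
  by (rule bij_betw_byWitness[where f'="\<lambda>x. vadd x y"]) (auto simp: vecs_def vadd_vadd_cancel)

lemma sum_vecs_translate:
  "y \<in> vecs n \<Longrightarrow> (\<Sum>x\<in>vecs n. f (vadd x y)) = (\<Sum>x\<in>vecs n. f x)"
  using sum.reindex_bij_betw[OF bij_betw_vadd] .

lemma hamming_vadd_shift:
  "length x = n \<Longrightarrow> length b = n \<Longrightarrow> length v = n \<Longrightarrow> hamming x (vadd b v) = hamming (vadd x b) v"
  unfolding hamming_def by (auto intro!: arg_cong[where f=card])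

section \<open>Generator lists and their spans\<close>

definition vec_lists :: "nat \<Rightarrow> nat \<Rightarrow> bool list list set" where
  "vec_lists n j = {bs. length bs = j \<and> set bs \<subseteq> vecs n}"

lemma vec_lists_conv: "vec_lists n j = {bs. set bs \<subseteq> vecs n \<and> length bs = j}"
  by (auto simp: vec_lists_def)

lemma finite_vec_lists [simp]: "finite (vec_lists n j)"
  unfolding vec_lists_conv by (rule finite_lists_length_eq) simp

lemma card_vec_lists: "card (vec_lists n j) = 2 ^ (n * j)"
  unfolding vec_lists_conv by (simp add: card_lists_length_eq card_vecs power_mult)

lemma vec_lists_0 [simp]: "vec_lists n 0 = {[]}"
  by (auto simp: vec_lists_def)

lemma vec_lists_Suc: "vec_lists n (Suc j) = (\<lambda>(bs, b). b # bs) ` (vec_lists n j \<times> vecs n)"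
  unfolding vec_lists_conv by (rule lists_length_Suc_eq)

lemma sum_vec_lists_Suc:
  "(\<Sum>bs\<in>vec_lists n (Suc j). f bs) = (\<Sum>bs\<in>vec_lists n j. \<Sum>b\<in>vecs n. f (b # bs))"
proof -
  have inj: "inj_on (\<lambda>(bs, b). b # bs) (vec_lists n j \<times> vecs n)"
    by (auto simp: inj_on_def)
  show ?thesis
    unfolding vec_lists_Suc sum.reindex[OF inj] by (simp add: sum.cartesian_product case_prod_beta)
qed

lemma vsum_Cons: "vsum n (b # bs) = vadd b (vsum n bs)"
  by (simp add: vsum_def)

lemma span2_Nil: "span2 n [] = {replicate n False}"
  by (simp add: span2_def vsum_def)

lemma span2_Cons: "span2 n (b # bs) = span2 n bs \<union> vadd b ` span2 n bs"
proof (intro equalityI subsetI)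
  fix v assume "v \<in> span2 n (b # bs)"
  then obtain c cs where "length cs = length bs"
    and v: "v = vsum n (map snd (filter fst (zip (c # cs) (b # bs))))"
    unfolding span2_def by (auto simp: length_Suc_conv)
  then have "vsum n (map snd (filter fst (zip cs bs))) \<in> span2 n bs"
    unfolding span2_def by blast
  with v show "v \<in> span2 n bs \<union> vadd b ` span2 n bs"
    by (cases c) (auto simp: vsum_Cons)
next
  fix v assume "v \<in> span2 n bs \<union> vadd b ` span2 n bs"
  then obtain cs where cs: "length cs = length bs"
    and v: "v = vsum n (map snd (filter fst (zip cs bs))) \<or> v = vadd b (vsum n (map snd (filter fst (zip cs bs))))"
    unfolding span2_def by auto
  have mem: "vsum n (map snd (filter fst (zip (c # cs) (b # bs)))) \<in> span2 n (b # bs)" for c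
    unfolding span2_def using cs by (intro CollectI exI[of _ "c # cs"]) simp
  from v show "v \<in> span2 n (b # bs)"
    using mem[of False] mem[of True] by (auto simp: vsum_Cons)
qed

lemma span2_subset_vecs: "set bs \<subseteq> vecs n \<Longrightarrow> span2 n bs \<subseteq> vecs n"
  by (induction bs) (auto simp: span2_Nil span2_Cons vecs_def)

section \<open>Volume of the Hamming ball\<close>

lemma bin_entropy_nonneg:
  assumes "0 < p" "p < 1"
  shows "0 \<le> bin_entropy p"
proof -
  have "p * log 2 p \<le> 0" "(1 - p) * log 2 (1 - p) \<le> 0"
    using assms by (simp_all add: mult_nonneg_nonpos)
  then show ?thesis
    unfolding bin_entropy_def by linarith
qed

definition bernoulli_weight :: "real \<Rightarrow> nat \<Rightarrow> bool list \<Rightarrow> real" where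
  "bernoulli_weight p n x = (\<Prod>i<n. if x ! i then p else 1 - p)"

lemma sum_bernoulli_weight: "(\<Sum>x\<in>vecs n. bernoulli_weight p n x) = 1"
proof (induction n)
  case 0
  then show ?case by (simp add: vecs_def bernoulli_weight_def)
next
  case (Suc n)
  have "(\<Sum>x\<in>vecs (Suc n). bernoulli_weight p (Suc n) x)
      = (\<Sum>x\<in>vecs n. p * bernoulli_weight p n x + (1 - p) * bernoulli_weight p n x)"
    unfolding sum_vecs_Suc bernoulli_weight_def prod.lessThan_Suc_shift by simp
  with Suc show ?case
    by (simp add: algebra_simps)
qed

abbreviation hamming_weight :: "bool list \<Rightarrow> nat" where
  "hamming_weight x \<equiv> hamming x (replicate (length x) False)"

lemma hamming_weight_le_length: "hamming_weight x \<le> length x"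
proof -
  have "hamming_weight x \<le> card {..<length x}"
    unfolding hamming_def by (intro card_mono) auto
  then show ?thesis by simp
qed

lemma bernoulli_weight_eq:
  assumes "x \<in> vecs n"
  shows "bernoulli_weight p n x = p ^ hamming_weight x * (1 - p) ^ (n - hamming_weight x)"
proof -
  have n: "length x = n"
    using assms by (simp add: vecs_def)
  have w: "hamming_weight x = card ({..<n} \<inter> {i. x ! i})"
    unfolding hamming_def n by (intro arg_cong[where f=card]) auto
  have "card ({..<n} \<inter> - {i. x ! i}) = n - card ({..<n} \<inter> {i. x ! i})"
    by (simp add: Diff_eq[symmetric] card_Diff_subset flip: Diff_Diff_Int)
  then show ?thesis
    unfolding bernoulli_weight_def w by (subst prod.If_cases) simp_all
qed

(* Since p < 1/2, p^w (1-p)^(n-w) decreases in w, and at w = pn it equals 2^(-H(p) n). *)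
lemma bernoulli_power_ge:
  assumes p: "0 < p" "p < 1/2" and w: "real w \<le> p * real n" "w \<le> n"
  shows "2 powr (- bin_entropy p * real n) \<le> p ^ w * (1 - p) ^ (n - w)"
proof -
  have "- bin_entropy p * real n * ln 2 = real n * ln (1 - p) + p * real n * (ln p - ln (1 - p))"
    unfolding bin_entropy_def log_def by (simp add: field_simps)
  also have "\<dots> \<le> real n * ln (1 - p) + real w * (ln p - ln (1 - p))"
    using w(1) p by (intro add_left_mono mult_right_mono_neg) auto
  also have "\<dots> = real w * ln p + real (n - w) * ln (1 - p)"
    using w(2) by (simp add: of_nat_diff algebra_simps)
  finally have "exp (- bin_entropy p * real n * ln 2) \<le> exp (real w * ln p + real (n - w) * ln (1 - p))"
    by simp
  also have "\<dots> = p ^ w * (1 - p) ^ (n - w)"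
    using p by (simp add: exp_add exp_of_nat_mult)
  finally show ?thesis
    by (simp add: powr_def mult.commute)
qed

definition ball0 :: "nat \<Rightarrow> real \<Rightarrow> bool list set" where
  "ball0 n p = {x \<in> vecs n. real (hamming_weight x) \<le> p * real n}"

lemma finite_ball0 [simp]: "finite (ball0 n p)"
  by (simp add: ball0_def)

lemma hamming_self [simp]: "hamming x x = 0"
  by (simp add: hamming_def)

lemma zero_in_ball0: "0 \<le> p \<Longrightarrow> replicate n False \<in> ball0 n p"
  by (simp add: ball0_def vecs_def)

lemma card_ball0_pos: "0 \<le> p \<Longrightarrow> 0 < card (ball0 n p)"
  using zero_in_ball0 by (intro card_gt_0_iff[THEN iffD2]) auto

lemma card_ball0_le:
  assumes p: "0 < p" "p < 1/2"
  shows "real (card (ball0 n p)) \<le> 2 powr (bin_entropy p * real n)"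
proof -
  have "real (card (ball0 n p)) * 2 powr (- bin_entropy p * real n)
      \<le> (\<Sum>x\<in>ball0 n p. bernoulli_weight p n x)"
    unfolding sum_constant[symmetric]
  proof (intro sum_mono)
    fix x assume "x \<in> ball0 n p"
    then have x: "x \<in> vecs n" "length x = n" "real (hamming_weight x) \<le> p * real n"
      by (auto simp: ball0_def vecs_def)
    show "2 powr (- bin_entropy p * real n) \<le> bernoulli_weight p n x"
      unfolding bernoulli_weight_eq[OF x(1)]
      using bernoulli_power_ge[OF p x(3)] hamming_weight_le_length[of x] x(2) by simp
  qed
  also have "\<dots> \<le> (\<Sum>x\<in>vecs n. bernoulli_weight p n x)"
    using p by (intro sum_mono2) (auto simp: ball0_def bernoulli_weight_def intro!: prod_nonneg)
  finally show ?thesis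
    by (simp add: sum_bernoulli_weight powr_minus field_simps)
qed

section \<open>Moments of the list sizes\<close>

abbreviation span_list_size :: "nat \<Rightarrow> real \<Rightarrow> bool list list \<Rightarrow> bool list \<Rightarrow> nat" where
  "span_list_size n p bs \<equiv> list_size n p (span2 n bs)"

(* Every codeword of span (b # bs) is v or b + v with v in span bs, and b + v is close to x
   iff v is close to x + b. *)
lemma span_list_size_Cons_le:
  assumes x: "x \<in> vecs n" and b: "b \<in> vecs n" and bs: "set bs \<subseteq> vecs n"
  shows "span_list_size n p (b # bs) x \<le> span_list_size n p bs x + span_list_size n p bs (vadd x b)"
proof -
  let ?C = "span2 n bs"
  let ?near = "\<lambda>z. {y \<in> ?C. length y = n \<and> real (hamming z y) \<le> p * real n}"
  have C: "?C \<subseteq> vecs n"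
    using span2_subset_vecs[OF bs] .
  have fin: "finite ?C"
    by (rule finite_subset[OF C finite_vecs])
  have "{y \<in> span2 n (b # bs). length y = n \<and> real (hamming x y) \<le> p * real n}
      \<subseteq> ?near x \<union> vadd b ` ?near (vadd x b)"
  proof
    fix y assume y: "y \<in> {y \<in> span2 n (b # bs). length y = n \<and> real (hamming x y) \<le> p * real n}"
    show "y \<in> ?near x \<union> vadd b ` ?near (vadd x b)"
    proof (cases "y \<in> ?C")
      case True
      then show ?thesis using y by auto
    next
      case False
      then obtain v where v: "v \<in> ?C" "y = vadd b v"
        using y by (auto simp: span2_Cons)
      have lv: "length v = n"
        using v C by (auto simp: vecs_def)
      have "hamming x y = hamming (vadd x b) v"
        using v(2) hamming_vadd_shift[of x n b v] x b lv by (simp add: vecs_def)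
      then show ?thesis
        using y v lv by auto
    qed
  qed
  then have "span_list_size n p (b # bs) x \<le> card (?near x \<union> vadd b ` ?near (vadd x b))"
    unfolding list_size_def by (intro card_mono) (use fin in auto)
  also have "\<dots> \<le> card (?near x) + card (vadd b ` ?near (vadd x b))"
    by (rule card_Un_le)
  also have "\<dots> \<le> span_list_size n p bs x + span_list_size n p bs (vadd x b)"
    unfolding list_size_def by (intro add_mono order.refl card_image_le) (use fin in auto)
  finally show ?thesis .
qed

lemma span_list_size_Nil:
  "x \<in> vecs n \<Longrightarrow> span_list_size n p [] x = (if x \<in> ball0 n p then 1 else 0)"
  by (simp add: list_size_def span2_Nil ball0_def vecs_def Collect_conv_if)

definition list_moment :: "nat \<Rightarrow> real \<Rightarrow> nat \<Rightarrow> bool list list \<Rightarrow> nat" where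
  "list_moment n p l bs = (\<Sum>x\<in>vecs n. span_list_size n p bs x choose l)"

lemma list_moment_0 [simp]: "list_moment n p 0 bs = 2 ^ n"
  by (simp add: list_moment_def card_vecs)

lemma list_moment_Nil: "2 \<le> l \<Longrightarrow> list_moment n p l [] = 0"
  by (simp add: list_moment_def span_list_size_Nil binomial_eq_0 cong: sum.cong)

lemma list_moment_1_Nil: "list_moment n p 1 [] = card (ball0 n p)"
proof -
  have "ball0 n p \<subseteq> vecs n"
    by (auto simp: ball0_def)
  then show ?thesis
    by (simp add: list_moment_def span_list_size_Nil sum.If_cases Int_absorb1 cong: sum.cong)
qed

lemma list_moment_1_Cons_le:
  assumes b: "b \<in> vecs n" and bs: "set bs \<subseteq> vecs n"
  shows "list_moment n p 1 (b # bs) \<le> 2 * list_moment n p 1 bs"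
proof -
  have "list_moment n p 1 (b # bs) \<le> (\<Sum>x\<in>vecs n. span_list_size n p bs x + span_list_size n p bs (vadd x b))"
    unfolding list_moment_def by (intro sum_mono) (simp add: span_list_size_Cons_le[OF _ b bs])
  also have "\<dots> = 2 * list_moment n p 1 bs"
    by (simp add: list_moment_def sum.distrib sum_vecs_translate[OF b])
  finally show ?thesis .
qed

lemma list_moment_1_le:
  "set bs \<subseteq> vecs n \<Longrightarrow> real (list_moment n p 1 bs) \<le> 2 ^ length bs * real (card (ball0 n p))"
proof (induction bs)
  case Nil
  then show ?case using list_moment_1_Nil[of n p] by simp
next
  case (Cons b bs)
  then have "real (list_moment n p 1 (b # bs)) \<le> 2 * real (list_moment n p 1 bs)"
    using list_moment_1_Cons_le[of b n bs p] by simp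
  with Cons show ?case by simp
qed

(* Vandermonde's identity splits (L x + L (x + b)) choose l, and translation invariance turns
   the sum over b of L (x + b) choose (l - i) into the moment of order l - i. *)
lemma sum_list_moment_Cons_le:
  assumes bs: "set bs \<subseteq> vecs n"
  shows "(\<Sum>b\<in>vecs n. list_moment n p l (b # bs))
         \<le> (\<Sum>i\<le>l. list_moment n p i bs * list_moment n p (l - i) bs)"
proof -
  let ?L = "span_list_size n p bs"
  have shift: "(\<Sum>b\<in>vecs n. ?L (vadd x b) choose i) = list_moment n p i bs" if "x \<in> vecs n" for x i
    using sum_vecs_translate[OF that, of "\<lambda>y. ?L y choose i"]
    by (simp add: list_moment_def vadd_commute)
  have "(\<Sum>b\<in>vecs n. list_moment n p l (b # bs))
      \<le> (\<Sum>b\<in>vecs n. \<Sum>x\<in>vecs n. (?L x + ?L (vadd x b)) choose l)"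
    unfolding list_moment_def
    by (intro sum_mono binomial_right_mono span_list_size_Cons_le bs) auto
  also have "\<dots> = (\<Sum>b\<in>vecs n. \<Sum>x\<in>vecs n. \<Sum>i\<le>l. (?L x choose i) * (?L (vadd x b) choose (l - i)))"
    by (simp add: vandermonde)
  also have "\<dots> = (\<Sum>x\<in>vecs n. \<Sum>i\<le>l. \<Sum>b\<in>vecs n. (?L x choose i) * (?L (vadd x b) choose (l - i)))"
    by (subst sum.swap) (intro sum.cong refl sum.swap)
  also have "\<dots> = (\<Sum>x\<in>vecs n. \<Sum>i\<le>l. (?L x choose i) * list_moment n p (l - i) bs)"
    by (intro sum.cong refl) (simp only: shift flip: sum_distrib_left)
  also have "\<dots> = (\<Sum>i\<le>l. list_moment n p i bs * list_moment n p (l - i) bs)"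
    by (subst sum.swap) (simp add: list_moment_def sum_distrib_right)
  finally show ?thesis .
qed

lemma card_list_size_ge_le_list_moment:
  "1 \<le> l \<Longrightarrow> card {x \<in> vecs n. l \<le> span_list_size n p bs x} \<le> list_moment n p l bs"
proof -
  assume l: "1 \<le> l"
  have "card {x \<in> vecs n. l \<le> span_list_size n p bs x} = (\<Sum>x\<in>vecs n. if l \<le> span_list_size n p bs x then 1 else 0)"
    by (simp add: sum.If_cases Collect_conj_eq Int_commute)
  also have "\<dots> \<le> list_moment n p l bs"
    unfolding list_moment_def using l by (intro sum_mono) (auto simp: Suc_le_eq)
  finally show ?thesis .
qed

section \<open>Moment targets\<close>

(* For l >= 1 this is 2^n mu^l, where mu = 2^j |ball0 n p| / 2^n is the mean list size of a code
   spanned by j generators. *)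
definition moment_scale :: "nat \<Rightarrow> real \<Rightarrow> nat \<Rightarrow> nat \<Rightarrow> real" where
  "moment_scale n p j l = (2 ^ j * real (card (ball0 n p))) ^ l / 2 ^ (n * (l - 1))"

definition moment_target :: "nat \<Rightarrow> real \<Rightarrow> nat \<Rightarrow> real \<Rightarrow> nat \<Rightarrow> nat \<Rightarrow> real" where
  "moment_target n p L \<Lambda> j l = (real L * \<Lambda>) ^ (l - 1) * moment_scale n p j l"

definition moments_bounded :: "nat \<Rightarrow> real \<Rightarrow> nat \<Rightarrow> real \<Rightarrow> bool list list \<Rightarrow> bool" where
  "moments_bounded n p L \<Lambda> bs \<longleftrightarrow>
     (\<forall>l\<in>{1..L}. real (list_moment n p l bs) \<le> moment_target n p L \<Lambda> (length bs) l)"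

(* Generators are added at the head of the list, so the tails of bs are the codes generated
   so far. *)
fun stays_bounded :: "nat \<Rightarrow> real \<Rightarrow> nat \<Rightarrow> real \<Rightarrow> bool list list \<Rightarrow> bool" where
  "stays_bounded n p L \<Lambda> [] = True"
| "stays_bounded n p L \<Lambda> (b # bs) \<longleftrightarrow> moments_bounded n p L \<Lambda> (b # bs) \<and> stays_bounded n p L \<Lambda> bs"

lemma stays_bounded_tl: "stays_bounded n p L \<Lambda> bs \<Longrightarrow> stays_bounded n p L \<Lambda> (tl bs)"
  by (cases bs) auto

lemma moment_scale_pos: "0 \<le> p \<Longrightarrow> 0 < moment_scale n p j l"
  using card_ball0_pos[of p n] by (simp add: moment_scale_def)

lemma moment_scale_Suc: "moment_scale n p (Suc j) l = 2 ^ l * moment_scale n p j l"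
  by (simp add: moment_scale_def power_mult_distrib field_simps)

lemma moment_scale_mult:
  assumes "1 \<le> i" "i < l"
  shows "moment_scale n p j i * moment_scale n p j (l - i) = 2 ^ n * moment_scale n p j l"
proof -
  have "(i - 1) + (l - i - 1) + 1 = l - 1"
    using assms by linarith
  then have e1: "n * (i - 1) + n * (l - i - 1) + n = n * (l - 1)"
    by (metis distrib_left nat_mult_1_right)
  have e2: "i + (l - i) = l"
    using assms by simp
  have "moment_scale n p j i * moment_scale n p j (l - i)
      = (2 ^ j * real (card (ball0 n p))) ^ l / (2 ^ (n * (i - 1)) * 2 ^ (n * (l - i - 1)))"
    unfolding moment_scale_def by (simp add: power_add[symmetric] e2)
  also have "\<dots> = 2 ^ n * moment_scale n p j l"
    unfolding moment_scale_def e1[symmetric] by (simp add: power_add field_simps)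
  finally show ?thesis .
qed

lemma moment_target_nonneg: "0 \<le> \<Lambda> \<Longrightarrow> 0 \<le> moment_target n p L \<Lambda> j l"
  by (simp add: moment_target_def moment_scale_def)

lemma list_moment_1_le_target:
  "set bs \<subseteq> vecs n \<Longrightarrow> real (list_moment n p 1 bs) \<le> moment_target n p L \<Lambda> (length bs) 1"
  using list_moment_1_le by (simp add: moment_target_def moment_scale_def)

lemma moments_bounded_Nil:
  assumes "0 \<le> \<Lambda>"
  shows "moments_bounded n p L \<Lambda> []"
  unfolding moments_bounded_def
proof
  fix l assume l: "l \<in> {1..L}"
  show "real (list_moment n p l []) \<le> moment_target n p L \<Lambda> (length []) l"
  proof (cases "l = 1")
    case True
    then show ?thesis using list_moment_1_le_target[of "[]" n p L \<Lambda>] by simp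
  next
    case False
    with l have "2 \<le> l" by simp
    then show ?thesis using list_moment_Nil moment_target_nonneg[OF assms] by simp
  qed
qed

lemma moments_bounded_if_stays_bounded:
  "0 \<le> \<Lambda> \<Longrightarrow> stays_bounded n p L \<Lambda> bs \<Longrightarrow> moments_bounded n p L \<Lambda> bs"
  by (cases bs) (auto simp: moments_bounded_Nil)

(* The terms i = 0 and i = l of the convolution give 2 * 2^n W_l; by the bounds on the lower
   moments each of the l - 1 middle terms is at most 2^n (L Lambda)^(l-2) times the scale. *)
lemma sum_list_moment_Cons_le_if_bounded:
  assumes \<Lambda>: "0 \<le> \<Lambda>" and bs: "set bs \<subseteq> vecs n" "moments_bounded n p L \<Lambda> bs"
    and l: "2 \<le> l" "l \<le> L"
  shows "(\<Sum>b\<in>vecs n. real (list_moment n p l (b # bs)))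
         \<le> 2 * 2 ^ n * real (list_moment n p l bs)
           + real (l - 1) * (real L * \<Lambda>) ^ (l - 2) * 2 ^ n * moment_scale n p (length bs) l"
proof -
  let ?W = "\<lambda>i. real (list_moment n p i bs)"
  let ?X = "moment_target n p L \<Lambda> (length bs)"
  have "{..l} = insert 0 (insert l {1..<l})"
    using l by auto
  then have split: "(\<Sum>i\<le>l. ?W i * ?W (l - i)) = 2 * 2 ^ n * ?W l + (\<Sum>i\<in>{1..<l}. ?W i * ?W (l - i))"
    using l by simp
  have "(\<Sum>i\<in>{1..<l}. ?W i * ?W (l - i)) \<le> (\<Sum>i\<in>{1..<l}. ?X i * ?X (l - i))"
  proof (intro sum_mono mult_mono)
    fix i assume "i \<in> {1..<l}"
    then have "i \<in> {1..L}" "l - i \<in> {1..L}"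
      using l by auto
    then show "?W i \<le> ?X i" "?W (l - i) \<le> ?X (l - i)"
      using bs(2) unfolding moments_bounded_def by blast+
  qed (simp_all add: moment_target_nonneg \<Lambda>)
  also have "\<dots> = (\<Sum>i\<in>{1..<l}. (real L * \<Lambda>) ^ (l - 2) * 2 ^ n * moment_scale n p (length bs) l)"
  proof (intro sum.cong refl)
    fix i assume i: "i \<in> {1..<l}"
    then have e: "(i - 1) + (l - i - 1) = l - 2"
      by auto
    have "?X i * ?X (l - i) = (real L * \<Lambda>) ^ ((i - 1) + (l - i - 1))
        * (moment_scale n p (length bs) i * moment_scale n p (length bs) (l - i))"
      unfolding moment_target_def power_add by (simp add: algebra_simps)
    also have "\<dots> = (real L * \<Lambda>) ^ (l - 2) * 2 ^ n * moment_scale n p (length bs) l"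
      using i by (simp add: e moment_scale_mult)
    finally show "?X i * ?X (l - i) = (real L * \<Lambda>) ^ (l - 2) * 2 ^ n * moment_scale n p (length bs) l" .
  qed
  finally have "(\<Sum>i\<in>{1..<l}. ?W i * ?W (l - i))
      \<le> real (l - 1) * (real L * \<Lambda>) ^ (l - 2) * 2 ^ n * moment_scale n p (length bs) l"
    using l by simp
  moreover have "(\<Sum>b\<in>vecs n. real (list_moment n p l (b # bs))) \<le> (\<Sum>i\<le>l. ?W i * ?W (l - i))"
    using sum_list_moment_Cons_le[OF bs(1), of p l] by (simp flip: of_nat_sum of_nat_mult)
  ultimately show ?thesis
    unfolding split by linarith
qed

(* Adding a generator multiplies the left-hand side by at most 3 * 2^n (by the previous lemma
   and the induction hypothesis) and the right-hand side by 2^l * 2^n >= 4 * 2^n. *)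
lemma expected_list_moment_le:
  assumes \<Lambda>: "0 \<le> \<Lambda>" and l: "2 \<le> l" "l \<le> L"
  shows "(\<Sum>bs\<in>vec_lists n j. if stays_bounded n p L \<Lambda> (tl bs) then real (list_moment n p l bs) else 0)
         \<le> 2 ^ (n * j) * (real (l - 1) * (real L * \<Lambda>) ^ (l - 2)) * moment_scale n p j l"
proof (induction j)
  case 0
  show ?case
    using l \<Lambda> by (simp add: list_moment_Nil moment_scale_def)
next
  case (Suc j)
  let ?c = "real (l - 1) * (real L * \<Lambda>) ^ (l - 2)"
  let ?E = "\<lambda>bs. if stays_bounded n p L \<Lambda> (tl bs) then real (list_moment n p l bs) else 0"
  have c: "0 \<le> ?c"
    using \<Lambda> by simp
  have U: "0 \<le> moment_scale n p j l"
    by (simp add: moment_scale_def)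
  have step: "(if stays_bounded n p L \<Lambda> bs then \<Sum>b\<in>vecs n. real (list_moment n p l (b # bs)) else 0)
      \<le> 2 * 2 ^ n * ?E bs + ?c * 2 ^ n * moment_scale n p j l" if bs: "bs \<in> vec_lists n j" for bs
  proof (cases "stays_bounded n p L \<Lambda> bs")
    case True
    then show ?thesis
      using sum_list_moment_Cons_le_if_bounded[OF \<Lambda> _ moments_bounded_if_stays_bounded[OF \<Lambda> True] l] bs
      by (simp add: stays_bounded_tl vec_lists_def mult.assoc)
  qed (use c U in simp)
  have "(\<Sum>bs\<in>vec_lists n (Suc j). ?E bs)
      = (\<Sum>bs\<in>vec_lists n j. if stays_bounded n p L \<Lambda> bs then \<Sum>b\<in>vecs n. real (list_moment n p l (b # bs)) else 0)"
    unfolding sum_vec_lists_Suc by (intro sum.cong refl) simp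
  also have "\<dots> \<le> (\<Sum>bs\<in>vec_lists n j. 2 * 2 ^ n * ?E bs + ?c * 2 ^ n * moment_scale n p j l)"
    by (intro sum_mono step)
  also have "\<dots> = 2 * 2 ^ n * (\<Sum>bs\<in>vec_lists n j. ?E bs) + 2 ^ (n * Suc j) * ?c * moment_scale n p j l"
    by (simp add: sum.distrib sum_distrib_left card_vec_lists power_add algebra_simps)
  also have "\<dots> \<le> 3 * (2 ^ (n * Suc j) * ?c * moment_scale n p j l)"
    using Suc by (simp add: power_add algebra_simps)
  also have "\<dots> \<le> 2 ^ l * (2 ^ (n * Suc j) * ?c * moment_scale n p j l)"
    using power_increasing[OF l(1), of "2::real"] c U by (intro mult_right_mono) simp_all
  finally show ?case
    by (simp add: moment_scale_Suc algebra_simps)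
qed

lemma count_moment_exceeds_target_le:
  assumes \<Lambda>: "0 < \<Lambda>" and p: "0 \<le> p" and l: "2 \<le> l" "l \<le> L"
  shows "(\<Sum>bs\<in>vec_lists n j. if stays_bounded n p L \<Lambda> (tl bs)
              \<and> moment_target n p L \<Lambda> j l < real (list_moment n p l bs) then 1 else 0)
         \<le> 2 ^ (n * j) / \<Lambda>"
proof -
  let ?X = "moment_target n p L \<Lambda> j l"
  let ?c = "real (l - 1) * (real L * \<Lambda>) ^ (l - 2)"
  have X: "0 < ?X"
    using moment_scale_pos[OF p] \<Lambda> l by (simp add: moment_target_def)
  have "(\<Sum>bs\<in>vec_lists n j. if stays_bounded n p L \<Lambda> (tl bs) \<and> ?X < real (list_moment n p l bs) then 1 else 0)
      \<le> (\<Sum>bs\<in>vec_lists n j. if stays_bounded n p L \<Lambda> (tl bs) then real (list_moment n p l bs) else 0) / ?X"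
    unfolding sum_divide_distrib by (intro sum_mono) (use X in auto)
  also have "\<dots> \<le> 2 ^ (n * j) * ?c * moment_scale n p j l / ?X"
    using expected_list_moment_le[OF less_imp_le[OF \<Lambda>] l] X by (intro divide_right_mono) auto
  also have "\<dots> = 2 ^ (n * j) * real (l - 1) / (real L * \<Lambda>)"
  proof -
    have "(real L * \<Lambda>) ^ (l - 1) = (real L * \<Lambda>) ^ (l - 2) * (real L * \<Lambda>)"
      using l by (simp flip: power_Suc2 add: Suc_diff_Suc numeral_2_eq_2)
    then show ?thesis
      using moment_scale_pos[OF p, of n j l] \<Lambda> l by (simp add: moment_target_def)
  qed
  also have "\<dots> \<le> 2 ^ (n * j) * real L / (real L * \<Lambda>)"
    using l \<Lambda> by (intro divide_right_mono mult_left_mono) auto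
  also have "\<dots> = 2 ^ (n * j) / \<Lambda>"
    using l by simp
  finally show ?thesis .
qed

lemma exceeds_target_if_leaves_bounds:
  assumes "set (b # bs) \<subseteq> vecs n" "\<not> stays_bounded n p L \<Lambda> (b # bs)" "stays_bounded n p L \<Lambda> bs"
  obtains l where "l \<in> {2..L}"
    "moment_target n p L \<Lambda> (length (b # bs)) l < real (list_moment n p l (b # bs))"
proof -
  obtain l where l: "l \<in> {1..L}"
    "moment_target n p L \<Lambda> (length (b # bs)) l < real (list_moment n p l (b # bs))"
    using assms(2,3) by (auto simp: moments_bounded_def not_le)
  moreover have "l \<noteq> 1"
    using l(2) list_moment_1_le_target[OF assms(1), of p L \<Lambda>] by auto
  ultimately show ?thesis
    using that[of l] by simp
qed

(* Union bound over the step at which the bounds are first violated and the order of the violated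
   bound; each of these events has probability at most 1/Lambda. *)
lemma count_not_stays_bounded_le:
  assumes \<Lambda>: "0 < \<Lambda>" and p: "0 \<le> p"
  shows "(\<Sum>bs\<in>vec_lists n j. if stays_bounded n p L \<Lambda> bs then 0 else 1) \<le> real j * real L * 2 ^ (n * j) / \<Lambda>"
proof (induction j)
  case 0
  show ?case
    using moments_bounded_Nil[of \<Lambda>] \<Lambda> by simp
next
  case (Suc j)
  let ?bad = "\<lambda>bs. if stays_bounded n p L \<Lambda> bs then 0 else 1 :: real"
  let ?exceeds = "\<lambda>l bs. if stays_bounded n p L \<Lambda> (tl bs)
      \<and> moment_target n p L \<Lambda> (Suc j) l < real (list_moment n p l bs) then 1 else 0 :: real"
  have step: "?bad (b # bs) \<le> ?bad bs + (\<Sum>l\<in>{2..L}. ?exceeds l (b # bs))"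
    if bs: "bs \<in> vec_lists n j" and b: "b \<in> vecs n" for b bs
  proof (cases "\<not> stays_bounded n p L \<Lambda> (b # bs) \<and> stays_bounded n p L \<Lambda> bs")
    case True
    moreover have "set (b # bs) \<subseteq> vecs n" "length bs = j"
      using bs b by (simp_all add: vec_lists_def)
    ultimately obtain l where l: "l \<in> {2..L}"
      "moment_target n p L \<Lambda> (Suc j) l < real (list_moment n p l (b # bs))"
      using exceeds_target_if_leaves_bounds[of b bs n p L \<Lambda>] by auto
    then have "1 \<le> (\<Sum>l\<in>{2..L}. ?exceeds l (b # bs))"
      using member_le_sum[of l "{2..L}" "\<lambda>l. ?exceeds l (b # bs)"] l True by simp
    with True show ?thesis
      by simp
  next
    case False
    moreover have "0 \<le> (\<Sum>l\<in>{2..L}. ?exceeds l (b # bs))"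
      by (intro sum_nonneg) simp
    ultimately show ?thesis
      by auto
  qed
  have "(\<Sum>bs\<in>vec_lists n (Suc j). ?bad bs)
      \<le> (\<Sum>bs\<in>vec_lists n j. \<Sum>b\<in>vecs n. ?bad bs + (\<Sum>l\<in>{2..L}. ?exceeds l (b # bs)))"
    unfolding sum_vec_lists_Suc by (intro sum_mono step)
  also have "\<dots> = 2 ^ n * (\<Sum>bs\<in>vec_lists n j. ?bad bs) + (\<Sum>l\<in>{2..L}. \<Sum>bs\<in>vec_lists n (Suc j). ?exceeds l bs)"
    unfolding sum_vec_lists_Suc
    by (simp add: sum.distrib card_vecs sum_distrib_left sum.swap[of _ "{2..L}"])
  also have "\<dots> \<le> 2 ^ n * (real j * real L * 2 ^ (n * j) / \<Lambda>) + (\<Sum>l\<in>{2..L}. 2 ^ (n * Suc j) / \<Lambda>)"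
    by (intro add_mono mult_left_mono sum_mono Suc count_moment_exceeds_target_le[OF \<Lambda> p]) auto
  also have "\<dots> \<le> 2 ^ n * (real j * real L * 2 ^ (n * j) / \<Lambda>) + real L * 2 ^ (n * Suc j) / \<Lambda>"
    using \<Lambda> by (simp add: divide_right_mono)
  also have "\<dots> = real (Suc j) * real L * 2 ^ (n * Suc j) / \<Lambda>"
    by (simp add: power_add add_divide_distrib[symmetric] algebra_simps)
  finally show ?case .
qed

lemma rlc_prob_ge_if_stays_bounded:
  assumes \<Lambda>: "0 < \<Lambda>" and p: "0 \<le> p"
    and P: "\<And>bs. bs \<in> vec_lists n k \<Longrightarrow> stays_bounded n p L \<Lambda> bs \<Longrightarrow> P (span2 n bs)"
  shows "1 - real k * real L / \<Lambda> \<le> rlc_prob n k P"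
proof -
  let ?good = "{bs \<in> vec_lists n k. stays_bounded n p L \<Lambda> bs}"
  have "(\<Sum>bs\<in>vec_lists n k. if stays_bounded n p L \<Lambda> bs then 0 else 1) = 2 ^ (n * k) - real (card ?good)"
    by (simp add: sum.If_cases card_vec_lists card_Diff_subset Collect_conj_eq Int_commute
        flip: Diff_eq Diff_Diff_Int of_nat_power)
  then have "2 ^ (n * k) - real k * real L * 2 ^ (n * k) / \<Lambda> \<le> real (card ?good)"
    using count_not_stays_bounded_le[OF \<Lambda> p, of n L k] by linarith
  also have "\<dots> \<le> real (card {bs. length bs = k \<and> set bs \<subseteq> vecs n \<and> P (span2 n bs)})"
    using P by (intro of_nat_mono card_mono) (auto simp: vec_lists_def
        intro: finite_subset[OF _ finite_vec_lists[of n k]])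
  finally show ?thesis
    unfolding rlc_prob_def by (simp add: field_simps)
qed

lemma moment_target_le:
  assumes l: "1 \<le> l" and L\<Lambda>: "1 \<le> real L * \<Lambda>" "real L * \<Lambda> \<le> 2 powr (\<gamma> * \<epsilon> * real n)"
    and mean: "2 ^ k * real (card (ball0 n p)) \<le> 2 powr ((1 - \<epsilon>) * real n)"
  shows "moment_target n p L \<Lambda> k l \<le> 2 ^ n * 2 powr (- real n * real l * \<epsilon> * (1 - \<gamma>))"
proof -
  have "moment_target n p L \<Lambda> k l
      = (real L * \<Lambda>) ^ (l - 1) * (2 ^ k * real (card (ball0 n p))) ^ l / 2 ^ (n * (l - 1))"
    by (simp add: moment_target_def moment_scale_def)
  also have "\<dots> \<le> (2 powr (\<gamma> * \<epsilon> * real n)) ^ l * (2 powr ((1 - \<epsilon>) * real n)) ^ l / 2 ^ (n * (l - 1))"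
  proof (intro divide_right_mono mult_mono power_mono)
    have "(real L * \<Lambda>) ^ (l - 1) \<le> (real L * \<Lambda>) ^ l"
      using L\<Lambda>(1) by (intro power_increasing) auto
    also have "\<dots> \<le> (2 powr (\<gamma> * \<epsilon> * real n)) ^ l"
      using L\<Lambda> by (intro power_mono) auto
    finally show "(real L * \<Lambda>) ^ (l - 1) \<le> (2 powr (\<gamma> * \<epsilon> * real n)) ^ l" .
  qed (use mean in auto)
  also have "\<dots> = 2 powr (real l * (\<gamma> * \<epsilon> * real n) + real l * ((1 - \<epsilon>) * real n) - real n * (real l - 1))"
  proof -
    have "(2::real) ^ (n * (l - 1)) = 2 powr (real n * (real l - 1))"
      using l by (simp add: powr_realpow[symmetric] of_nat_diff)
    then show ?thesis
      by (simp add: powr_power powr_add powr_diff)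
  qed
  also have "\<dots> = 2 ^ n * 2 powr (- real n * real l * \<epsilon> * (1 - \<gamma>))"
    by (simp add: powr_realpow[symmetric] powr_add[symmetric] algebra_simps)
  finally show ?thesis .
qed

lemma good_code_if_moments_bounded:
  assumes bounded: "moments_bounded n p L \<Lambda> bs"
    and L\<Lambda>: "1 \<le> real L * \<Lambda>" "real L * \<Lambda> \<le> 2 powr (\<gamma> * \<epsilon> * real n)"
    and mean: "2 ^ length bs * real (card (ball0 n p)) \<le> 2 powr ((1 - \<epsilon>) * real n)"
  shows "good_code n p \<epsilon> \<gamma> L (span2 n bs)"
  unfolding good_code_def
proof (intro allI impI)
  fix l assume "l \<le> L"
  show "real (card {x \<in> vecs n. l \<le> span_list_size n p bs x}) \<le> 2 ^ n * 2 powr (- real n * real l * \<epsilon> * (1 - \<gamma>))"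
  proof (cases "l = 0")
    case True
    have "card {x \<in> vecs n. l \<le> span_list_size n p bs x} \<le> card (vecs n)"
      by (intro card_mono) auto
    with True show ?thesis
      by (simp add: card_vecs)
  next
    case False
    then have "1 \<le> l" and "l \<in> {1..L}"
      using \<open>l \<le> L\<close> by auto
    then have "real (card {x \<in> vecs n. l \<le> span_list_size n p bs x}) \<le> real (list_moment n p l bs)"
      using card_list_size_ge_le_list_moment[of l n p bs] by simp
    also have "\<dots> \<le> moment_target n p L \<Lambda> (length bs) l"
      using bounded \<open>l \<in> {1..L}\<close> unfolding moments_bounded_def by blast
    also have "\<dots> \<le> 2 ^ n * 2 powr (- real n * real l * \<epsilon> * (1 - \<gamma>))"
      by (rule moment_target_le[OF \<open>1 \<le> l\<close> L\<Lambda> mean])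
    finally show ?thesis .
  qed
qed

lemma eventually_linear_le_exponential:
  "0 < a \<Longrightarrow> eventually (\<lambda>n. real n * c \<le> 2 powr (a * real n)) sequentially"
  by real_asymp

lemma rate_dimension_le:
  assumes "0 < p" "p < 1" "0 \<le> \<epsilon>" and k: "real k = (1 - bin_entropy p - \<epsilon>) * real n"
  shows "k \<le> n"
proof -
  have "0 \<le> (bin_entropy p + \<epsilon>) * real n"
    using bin_entropy_nonneg[of p] assms by simp
  with k have "real k \<le> real n"
    by (simp add: algebra_simps)
  then show ?thesis
    by simp
qed

lemma mean_list_size_le:
  assumes p: "0 < p" "p < 1/2" and k: "real k = (1 - bin_entropy p - \<epsilon>) * real n"
  shows "2 ^ k * real (card (ball0 n p)) \<le> 2 powr ((1 - \<epsilon>) * real n)"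
proof -
  have "2 ^ k * real (card (ball0 n p)) \<le> 2 powr real k * 2 powr (bin_entropy p * real n)"
    using card_ball0_le[OF p] by (simp add: powr_realpow)
  also have "\<dots> = 2 powr (real k + bin_entropy p * real n)"
    by (simp add: powr_add)
  also have "real k + bin_entropy p * real n = (1 - \<epsilon>) * real n"
    using k by (simp add: algebra_simps)
  finally show ?thesis .
qed

(* Lambda = 2^(gamma eps n / 2) balances the slack (L Lambda)^(l-1) in the moment targets
   against the failure probability k L / Lambda. *)
lemma rlc_prob_good_code_ge:
  assumes \<epsilon>: "0 < \<epsilon>" and \<gamma>: "0 < \<gamma>" and p: "0 < p" "p < 1/2" and L: "1 \<le> L" and n: "1 \<le> n"
    and k: "real k = (1 - bin_entropy p - \<epsilon>) * real n"
    and large: "real n * real L \<le> 2 powr (\<gamma> * \<epsilon> / 4 * real n)"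
  shows "1 - 2 powr (- (\<gamma> * \<epsilon> / 4 * real n)) \<le> rlc_prob n k (good_code n p \<epsilon> \<gamma> L)"
proof -
  define a where "a = \<gamma> * \<epsilon> / 4 * real n"
  define \<Lambda> where "\<Lambda> = 2 powr (2 * a)"
  have a: "0 \<le> a"
    using \<epsilon> \<gamma> by (simp add: a_def)
  have \<Lambda>: "1 \<le> \<Lambda>"
    using a by (simp add: \<Lambda>_def ge_one_powr_ge_zero)
  have "real L \<le> real n * real L"
    using n by (simp add: mult_le_cancel_right1)
  with large have "real L \<le> 2 powr a"
    by (simp add: a_def)
  then have "real L * \<Lambda> \<le> 2 powr a * 2 powr (2 * a)"
    unfolding \<Lambda>_def by (intro mult_right_mono) simp_all
  also have "\<dots> \<le> 2 powr (\<gamma> * \<epsilon> * real n)"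
    using \<epsilon> \<gamma> by (simp add: a_def flip: powr_add)
  finally have L\<Lambda>: "real L * \<Lambda> \<le> 2 powr (\<gamma> * \<epsilon> * real n)" .
  have "1 \<le> real L"
    using L by simp
  then have L\<Lambda>1: "1 \<le> real L * \<Lambda>"
    using \<Lambda> by (metis mult_mono' mult_1_left zero_le_one)
  have "k \<le> n"
    using rate_dimension_le[OF p(1) _ _ k] p \<epsilon> by simp
  then have "real k * real L \<le> real n * real L"
    by (intro mult_right_mono) simp_all
  with large have "real k * real L \<le> 2 powr a"
    by (simp add: a_def)
  then have "real k * real L / \<Lambda> \<le> 2 powr a / 2 powr (2 * a)"
    unfolding \<Lambda>_def by (simp add: divide_right_mono)
  also have "\<dots> = 2 powr (- a)"
    by (simp flip: powr_diff)
  finally have "1 - 2 powr (- a) \<le> 1 - real k * real L / \<Lambda>"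
    by simp
  also have "\<dots> \<le> rlc_prob n k (good_code n p \<epsilon> \<gamma> L)"
  proof (rule rlc_prob_ge_if_stays_bounded)
    show "0 < \<Lambda>" "0 \<le> p"
      using \<Lambda> p by simp_all
    fix bs assume "bs \<in> vec_lists n k" "stays_bounded n p L \<Lambda> bs"
    then show "good_code n p \<epsilon> \<gamma> L (span2 n bs)"
      using \<Lambda> mean_list_size_le[OF p k] by (intro good_code_if_moments_bounded[OF _ L\<Lambda>1 L\<Lambda>] moments_bounded_if_stays_bounded)
        (simp_all add: vec_lists_def)
  qed
  finally show ?thesis
    by (simp add: a_def)
qed

theorem theorem5:
  fixes L :: nat
  assumes "L \<ge> 1"
  shows "\<exists>c > 0. \<forall>\<epsilon> \<gamma> p. 0 < \<epsilon> \<and> \<epsilon> < 1 \<and> 0 < \<gamma> \<and> \<gamma> < 1 \<and> 0 < p \<and> p < 1/2 \<longrightarrow>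
           (\<exists>N. \<forall>n k. n \<ge> N \<and> real k = (1 - bin_entropy p - \<epsilon>) * real n \<longrightarrow>
              rlc_prob n k (good_code n p \<epsilon> \<gamma> L) \<ge> 1 - exp (- c * \<gamma> * \<epsilon> * real n))"
proof (intro exI[of _ "ln 2 / 4"] conjI allI impI)
  fix \<epsilon> \<gamma> p :: real
  assume prm: "0 < \<epsilon> \<and> \<epsilon> < 1 \<and> 0 < \<gamma> \<and> \<gamma> < 1 \<and> 0 < p \<and> p < 1/2"
  then have "eventually (\<lambda>n. 1 \<le> n \<and> real n * real L \<le> 2 powr (\<gamma> * \<epsilon> / 4 * real n)) sequentially"
    by (intro eventually_conj eventually_ge_at_top eventually_linear_le_exponential) simp
  then obtain N where N: "\<And>n. N \<le> n \<Longrightarrow> 1 \<le> n \<and> real n * real L \<le> 2 powr (\<gamma> * \<epsilon> / 4 * real n)"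
    unfolding eventually_sequentially by blast
  have exp_eq: "exp (- (ln 2 / 4) * \<gamma> * \<epsilon> * real n) = 2 powr (- (\<gamma> * \<epsilon> / 4 * real n))" for n
    by (simp add: powr_def)
  show "\<exists>N. \<forall>n k. N \<le> n \<and> real k = (1 - bin_entropy p - \<epsilon>) * real n \<longrightarrow>
      1 - exp (- (ln 2 / 4) * \<gamma> * \<epsilon> * real n) \<le> rlc_prob n k (good_code n p \<epsilon> \<gamma> L)"
  proof (intro exI[of _ N] allI impI)
    fix n k assume "N \<le> n \<and> real k = (1 - bin_entropy p - \<epsilon>) * real n"
    then show "1 - exp (- (ln 2 / 4) * \<gamma> * \<epsilon> * real n) \<le> rlc_prob n k (good_code n p \<epsilon> \<gamma> L)"
      unfolding exp_eq using prm assms N[of n] by (intro rlc_prob_good_code_ge) auto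
  qed
qed simp

end
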